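(* Let $n\geq 1$. The restriction map $H^\bullet(\Gamma_{n+1};\mathbb{Q})\to H^\bullet(\Gamma_n;\mathbb{Q})$ induced by the natural inclusion $\Gamma_n\hookrightarrow\Gamma_{n+1}$ sends $\alpha_{\mathcal D}$, for $\mathcal D\in\mathcal D_{n+1}$, to $\alpha_{\mathcal D'}$ if $\mathcal D$ has an isolated vertex and $\mathcal D'\in\mathcal D_n$ is obtained by deleting one isolated vertex, and to $0$ if $\mathcal D$ has no isolated vertex. Consequently, for every $r\ge 0$, the map $H^r(\Gamma_{n+1};\mathbb{Q})\to H^r(\Gamma_n;\mathbb{Q})$ is an isomorphism whenever $n\geq 2r$.
   Context: $\Gamma_n=\mathrm{Br}_n/[P_n,P_n]$ where $P_n\subset\mathrm{Br}_n$ is the pure braid group; $\mathbb{Z}\mathcal A_n=P_n/[P_n,P_n]$; $H^\bullet(\Gamma_n;\mathbb{Q})$ is identified via restriction with $H^\bullet(\mathbb{Z}\mathcal A_n;\mathbb{Q})^{S_n}$, where $H^\bullet(\mathbb{Z}\mathcal A_n;\mathbb{Q})$ is the exterior algebra on $\omega_{ij}$ ($1\le i<j\le n$), with $\sigma(\omega_{ij})=\omega_{\sigma(i)\sigma(j)}$ if $\sigma(i)<\sigma(j)$, $\omega_{\sigma(j)\sigma(i)}$ otherwise. The inclusion $\Gamma_n\hookrightarrow\Gamma_{n+1}$ comes from adding a strand; on these exterior algebras restriction sends $\omega_{ij}$ with $j\le n$ to $\omega_{ij}$ and $\omega_{i,n+1}$ to $0$. For a simple graph $\Delta$ on $\{1,\dots,n\}$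 with lexicographically ordered edges $(i_1,j_1),\dots,(i_k,j_k)$, $\mu_\Delta=\omega_{i_1j_1}\cdots\omega_{i_kj_k}$. A graph is invariant if every automorphism induces an even permutation of its edges; $\mathcal D_n$ is the set of isomorphism classes of invariant graphs with exactly $n$ vertices. Representatives are chosen coherently: for each class $\mathcal G_0$ without isolated vertices a representative on $\{1,\dots,|V\mathcal G_0|\}$ is fixed, and the representative $\Delta_{\mathcal D}$ of a class $\mathcal D$ with $n$ vertices whose non-isolated part is $\mathcal G_0$ is that graph with the vertices $|V\mathcal G_0|+1,\dots,n$ added as isolated vertices. Then $\alpha_{\mathcal D}=\frac{1}{|\mathrm{Stab}_{S_n}(\Delta_{\mathcal D})|}\sum_{\sigma\in S_n}\sigma(\mu_{\Delta_{\mathcal D}})$, and the $\alpha_{\mathcal D}$, $\mathcal D\in\mathcal D_n$, form a basis of $H^\bullet(\Gamma_n;\mathbb{Q})$. *)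

theory Defs
  imports Complex_Main "HOL-Combinatorics.Permutations" "HOL-Library.Product_Lexorder"
begin

text \<open>Edges are pairs (i,j) with i<j; a simple graph on {1..n} is given by its edge set.
  Pairs are ordered lexicographically (Product_Lexorder).\<close>

definition edges_on :: "nat \<Rightarrow> (nat \<times> nat) set" where
  "edges_on n = {(i,j). 1 \<le> i \<and> i < j \<and> j \<le> n}"

definition graph_on :: "nat \<Rightarrow> (nat \<times> nat) set \<Rightarrow> bool" where
  "graph_on n E \<longleftrightarrow> E \<subseteq> edges_on n"

definition emap :: "(nat \<Rightarrow> nat) \<Rightarrow> nat \<times> nat \<Rightarrow> nat \<times> nat" where
  "emap \<sigma> e = (min (\<sigma> (fst e)) (\<sigma> (snd e)), max (\<sigma> (fst e)) (\<sigma> (snd e)))"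

definition gact :: "(nat \<Rightarrow> nat) \<Rightarrow> (nat \<times> nat) set \<Rightarrow> (nat \<times> nat) set" where
  "gact \<sigma> E = emap \<sigma> ` E"

definition orbit :: "nat \<Rightarrow> (nat \<times> nat) set \<Rightarrow> (nat \<times> nat) set set" where
  "orbit n E = {gact \<sigma> E | \<sigma>. \<sigma> permutes {1..n}}"

definition graph_classes :: "nat \<Rightarrow> (nat \<times> nat) set set set" where
  "graph_classes n = {orbit n E | E. graph_on n E}"

definition stab :: "nat \<Rightarrow> (nat \<times> nat) set \<Rightarrow> (nat \<Rightarrow> nat) set" where
  "stab n E = {\<sigma>. \<sigma> permutes {1..n} \<and> gact \<sigma> E = E}"

definition invariant_graph :: "nat \<Rightarrow> (nat \<times> nat) set \<Rightarrow> bool" where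
  "invariant_graph n E \<longleftrightarrow> graph_on n E \<and>
     (\<forall>\<sigma> \<in> stab n E. evenperm (\<lambda>e. if e \<in> E then emap \<sigma> e else e))"

definition D_classes :: "nat \<Rightarrow> (nat \<times> nat) set set set" where
  "D_classes n = {D \<in> graph_classes n. \<exists>E \<in> D. invariant_graph n E}"

definition verts :: "(nat \<times> nat) set \<Rightarrow> nat set" where
  "verts E = fst ` E \<union> snd ` E"

definition isolated :: "nat \<Rightarrow> (nat \<times> nat) set \<Rightarrow> bool" where
  "isolated v E \<longleftrightarrow> v \<notin> verts E"

definition delete_vertex :: "nat \<Rightarrow> (nat \<times> nat) set \<Rightarrow> (nat \<times> nat) set" where
  "delete_vertex v E = (\<lambda>(i,j). (if i > v then i - 1 else i, if j > v then j - 1 else j)) ` E"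

definition isofree_classes :: "(nat \<times> nat) set set set" where
  "isofree_classes = {orbit m E | m E. graph_on m E \<and> verts E = {1..m}}"

definition nonisolated_part :: "(nat \<times> nat) set set \<Rightarrow> (nat \<times> nat) set set" where
  "nonisolated_part D = {F \<in> D. \<exists>m. verts F = {1..m}}"

text \<open>A coherent choice of representatives: R picks, for each class without isolated vertices,
  a representative on {1..m}; Delta_D is that graph with isolated vertices appended
  (same edge set).\<close>
definition rep_choice :: "((nat \<times> nat) set set \<Rightarrow> (nat \<times> nat) set) \<Rightarrow> bool" where
  "rep_choice R \<longleftrightarrow> (\<forall>C \<in> isofree_classes. R C \<in> C)"

definition Delta :: "((nat \<times> nat) set set \<Rightarrow> (nat \<times> nat) set) \<Rightarrow> (nat \<times> nat) set set
    \<Rightarrow> (nat \<times> nat) set" where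
  "Delta R D = R (nonisolated_part D)"

text \<open>Elements of the exterior algebra on the w_ij are coefficient functions on
  monomials mu_F (F a finite edge set, factors in lexicographic order).\<close>
type_synonym ext = "(nat \<times> nat) set \<Rightarrow> rat"

definition inversions :: "('a::linorder) list \<Rightarrow> nat" where
  "inversions xs = card {(a,b). a < b \<and> b < length xs \<and> xs ! b < xs ! a}"

text \<open>sigma(mu_E) = esign sigma E * mu_(gact sigma E): the sign of sorting the factors.\<close>
definition esign :: "(nat \<Rightarrow> nat) \<Rightarrow> (nat \<times> nat) set \<Rightarrow> rat" where
  "esign \<sigma> E = (-1) ^ inversions (map (emap \<sigma>) (sorted_list_of_set E))"

definition act :: "nat \<Rightarrow> (nat \<Rightarrow> nat) \<Rightarrow> ext \<Rightarrow> ext" where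
  "act n \<sigma> x = (\<lambda>F. \<Sum>E\<in>Pow (edges_on n). x E * (if gact \<sigma> E = F then esign \<sigma> E else 0))"

text \<open>H^r(Gamma_n;Q) = S_n-invariants of degree r in H(ZA_n;Q).\<close>
definition cohom :: "nat \<Rightarrow> nat \<Rightarrow> ext set" where
  "cohom n r = {x. (\<forall>F. (F \<notin> Pow (edges_on n) \<or> card F \<noteq> r) \<longrightarrow> x F = 0) \<and>
                   (\<forall>\<sigma>. \<sigma> permutes {1..n} \<longrightarrow> act n \<sigma> x = x)}"

text \<open>Restriction H(ZA_{n+1}) \<rightarrow> H(ZA_n): w_ij \<mapsto> w_ij (j \<le> n), w_{i,n+1} \<mapsto> 0.\<close>
definition res :: "nat \<Rightarrow> ext \<Rightarrow> ext" where
  "res n x = (\<lambda>F. if F \<subseteq> edges_on n then x F else 0)"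

definition alpha :: "((nat \<times> nat) set set \<Rightarrow> (nat \<times> nat) set) \<Rightarrow> nat \<Rightarrow> (nat \<times> nat) set set \<Rightarrow> ext" where
  "alpha R n D = (\<lambda>F. (1 / of_nat (card (stab n (Delta R D)))) *
      (\<Sum>\<sigma> \<in> {\<sigma>. \<sigma> permutes {1..n}}.
          if gact \<sigma> (Delta R D) = F then esign \<sigma> (Delta R D) else 0))"

end

theory Submission
  imports Defs
begin

text \<open>
  A monomial of degree \<open>r\<close> involves at most \<open>2r\<close> vertices, so for \<open>2r \<le> n\<close> some permutation
  of \<open>{1..n+1}\<close> moves it onto \<open>{1..n}\<close>. Hence an \<open>S\<^sub>n\<^sub>+\<^sub>1\<close>-invariant is determined by its
  restriction, and an \<open>S\<^sub>n\<close>-invariant \<open>y\<close> extends by \<open>x(F) = \<plusminus>y(\<sigma>F)\<close> for any such \<open>\<sigma>\<close>; this is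
  well defined because a permutation of \<open>{1..n+1}\<close> carrying one monomial on \<open>{1..n}\<close> to another
  agrees on the vertices involved with a permutation of \<open>{1..n}\<close>.

  For \<open>\<alpha>\<^sub>D\<close>, restriction keeps exactly the terms \<open>\<sigma>(\<mu>\<^sub>\<Delta>)\<close> supported on \<open>{1..n}\<close>. If \<open>\<Delta>\<close> has an
  isolated vertex it lives on \<open>{1..n}\<close>, and writing \<open>\<sigma> = (n+1 b) \<circ> q\<close> with \<open>q \<in> S\<^sub>n\<close>, the term
  survives iff \<open>b\<close> avoids \<open>q(V(\<Delta>))\<close>, and then equals \<open>q(\<mu>\<^sub>\<Delta>)\<close>. So the orbit sum and the
  stabiliser order both acquire the factor \<open>n + 1 - |V(\<Delta>)|\<close>, which cancels; and since deleting an
  isolated vertex does not change the non-isolated part, \<open>\<Delta>\<^sub>D\<close> and \<open>\<Delta>\<^sub>D\<^sub>'\<close> coincide. Without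
  isolated vertices every term involves the vertex \<open>n+1\<close> and restricts to \<open>0\<close>.
\<close>

section \<open>Signs of inversions\<close>

lemma neg_one_power_card_sym_diff:
  assumes "finite A" "finite B"
  shows "(-1::'a::ring_1) ^ card (sym_diff A B) = (-1) ^ card A * (-1) ^ card B"
proof -
  have "card (sym_diff A B) + card (A \<inter> B) = card (A \<union> B)"
    using assms by (subst card_Un_disjoint[symmetric]) (auto intro: arg_cong[where f=card])
  then have "card A + card B = card (sym_diff A B) + 2 * card (A \<inter> B)"
    using card_Un_Int[OF assms] by simp
  then have "(-1::'a) ^ card A * (-1) ^ card B = (-1) ^ card (sym_diff A B) * ((-1) ^ 2) ^ card (A \<inter> B)"
    by (metis power_add power_mult)
  then show ?thesis
    by simp
qed

definition inversion_pairs :: "('a::linorder \<Rightarrow> 'b::linorder) \<Rightarrow> 'a set \<Rightarrow> ('a \<times> 'a) set" where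
  "inversion_pairs f E = {(a,b). a \<in> E \<and> b \<in> E \<and> a < b \<and> f b < f a}"

lemma inversions_map_sorted_list_of_set:
  assumes "finite E"
  shows "inversions (map f (sorted_list_of_set E)) = card (inversion_pairs f E)"
proof -
  define xs where "xs = sorted_list_of_set E"
  have sorted: "sorted_wrt (<) xs" and dist: "distinct xs" and set: "set xs = E"
    unfolding xs_def using assms by simp_all
  let ?I = "{(i,j). i < j \<and> j < length xs \<and> f (xs ! j) < f (xs ! i)}"
  have "bij_betw (\<lambda>(i,j). (xs ! i, xs ! j)) ?I (inversion_pairs f E)"
  proof (rule bij_betw_imageI)
    show "inj_on (\<lambda>(i,j). (xs ! i, xs ! j)) ?I"
      by (auto simp: inj_on_def nth_eq_iff_index_eq[OF dist])
    show "(\<lambda>(i,j). (xs ! i, xs ! j)) ` ?I = inversion_pairs f E"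
    proof
      show "(\<lambda>(i,j). (xs ! i, xs ! j)) ` ?I \<subseteq> inversion_pairs f E"
        using sorted_wrt_nth_less[OF sorted] set by (auto simp: inversion_pairs_def)
      show "inversion_pairs f E \<subseteq> (\<lambda>(i,j). (xs ! i, xs ! j)) ` ?I"
      proof
        fix p assume "p \<in> inversion_pairs f E"
        then obtain a b where p: "p = (a,b)" "a \<in> E" "b \<in> E" "a < b" "f b < f a"
          by (auto simp: inversion_pairs_def)
        obtain i j where ij: "i < length xs" "xs ! i = a" "j < length xs" "xs ! j = b"
          using p set by (metis in_set_conv_nth)
        have "i < j"
          using sorted_wrt_nth_less[OF sorted, of j i] ij p by (cases i j rule: linorder_cases) auto
        then show "p \<in> (\<lambda>(i,j). (xs ! i, xs ! j)) ` ?I"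
          using ij p by (auto intro!: image_eqI[of _ _ "(i,j)"])
      qed
    qed
  qed
  then have "card ?I = card (inversion_pairs f E)"
    by (rule bij_betw_same_card)
  moreover have "inversions (map f xs) = card ?I"
    unfolding inversions_def by (auto intro!: arg_cong[where f=card])
  ultimately show ?thesis
    unfolding xs_def by simp
qed

lemma bij_betw_sorted_image_pairs:
  fixes f :: "'a::linorder \<Rightarrow> 'b::linorder"
  assumes "inj_on f E"
  shows "bij_betw (\<lambda>(a,b). (min (f a) (f b), max (f a) (f b)))
           {(a,b). a \<in> E \<and> b \<in> E \<and> a < b} {(c,d). c \<in> f ` E \<and> d \<in> f ` E \<and> c < d}"
    (is "bij_betw ?sort ?P ?Q")
proof (rule bij_betw_imageI)
  show "inj_on ?sort ?P"
  proof (rule inj_onI, clarsimp)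
    fix a b c d
    assume "a \<in> E" "b \<in> E" "a < b" "c \<in> E" "d \<in> E" "c < d"
      and "min (f a) (f b) = min (f c) (f d)" "max (f a) (f b) = max (f c) (f d)"
    moreover from this have "{f a, f b} = {f c, f d}"
      by (auto simp: min_def max_def split: if_splits)
    ultimately have "(a = c \<and> b = d) \<or> (a = d \<and> b = c)"
      using assms by (auto simp: doubleton_eq_iff dest: inj_onD)
    then show "a = c \<and> b = d"
      using \<open>a < b\<close> \<open>c < d\<close> by auto
  qed
  show "?sort ` ?P = ?Q"
  proof (intro equalityI subsetI)
    fix q assume "q \<in> ?sort ` ?P"
    then obtain a b where "q = (min (f a) (f b), max (f a) (f b))" "a \<in> E" "b \<in> E" "a \<noteq> b"
      by auto
    moreover from this have "f a \<noteq> f b"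
      using assms by (auto dest: inj_onD)
    ultimately show "q \<in> ?Q"
      by (auto simp: min_def max_def)
  next
    fix q assume "q \<in> ?Q"
    then obtain a b where q: "q = (f a, f b)" "a \<in> E" "b \<in> E" "f a < f b"
      by auto
    then consider "a < b" | "b < a"
      by (metis less_irrefl neqE)
    then show "q \<in> ?sort ` ?P"
    proof cases
      case 1
      then show ?thesis using q by (auto intro!: image_eqI[of _ _ "(a,b)"])
    next
      case 2
      then show ?thesis using q by (auto intro!: image_eqI[of _ _ "(b,a)"])
    qed
  qed
qed

text \<open>A pair is inverted by \<open>g \<circ> f\<close> iff it is inverted by exactly one of \<open>f\<close> and \<open>g\<close>
  (the latter acting on the sorted image pair).\<close>
lemma neg_one_power_inversion_pairs_comp:
  fixes f :: "'a::linorder \<Rightarrow> 'b::linorder" and g :: "'b \<Rightarrow> 'c::linorder"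
  assumes "finite E" and inj_f: "inj_on f E" and inj_g: "inj_on g (f ` E)"
  shows "(-1::'d::ring_1) ^ card (inversion_pairs (g \<circ> f) E) =
           (-1) ^ card (inversion_pairs g (f ` E)) * (-1) ^ card (inversion_pairs f E)"
proof -
  let ?pairs = "{(a,b). a \<in> E \<and> b \<in> E \<and> a < b}"
  let ?sort = "\<lambda>(a,b). (min (f a) (f b), max (f a) (f b))"
  define B where "B = {p \<in> ?pairs. ?sort p \<in> inversion_pairs g (f ` E)}"
  have "p \<in> inversion_pairs (g \<circ> f) E \<longleftrightarrow> p \<in> sym_diff (inversion_pairs f E) B" for p
  proof (cases "p \<in> ?pairs")
    case True
    then obtain a b where p: "p = (a,b)" "a \<in> E" "b \<in> E" "a < b"
      by auto
    then have "f a \<noteq> f b" "g (f a) \<noteq> g (f b)"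
      using inj_f inj_g by (auto dest: inj_onD)
    then show ?thesis
      using p by (cases "f a < f b") (auto simp: inversion_pairs_def B_def min_def max_def)
  next
    case False
    then show ?thesis
      by (auto simp: inversion_pairs_def B_def)
  qed
  then have "inversion_pairs (g \<circ> f) E = sym_diff (inversion_pairs f E) B"
    by blast
  moreover have "card B = card (inversion_pairs g (f ` E))"
  proof -
    have bij: "bij_betw ?sort ?pairs {(c,d). c \<in> f ` E \<and> d \<in> f ` E \<and> c < d}"
      by (rule bij_betw_sorted_image_pairs[OF inj_f])
    have "bij_betw ?sort B (?sort ` B)"
      by (rule bij_betw_subset[OF bij]) (auto simp: B_def)
    moreover have "?sort ` B = ?sort ` ?pairs \<inter> inversion_pairs g (f ` E)"
      unfolding B_def by blast
    then have "?sort ` B = inversion_pairs g (f ` E)"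
      using bij unfolding bij_betw_def by (auto simp: inversion_pairs_def)
    ultimately show ?thesis
      by (simp add: bij_betw_same_card)
  qed
  moreover have "finite (inversion_pairs f E)" "finite B"
    by (auto simp: inversion_pairs_def B_def assms(1) intro: finite_subset[of _ "E \<times> E"])
  ultimately show ?thesis
    by (simp add: neg_one_power_card_sym_diff flip: power_add add.commute)
qed

section \<open>The action of vertex maps on edge sets\<close>

definition increasing_pairs :: "(nat \<times> nat) set" where
  "increasing_pairs = {p. fst p < snd p}"

lemma edges_on_iff: "F \<subseteq> edges_on N \<longleftrightarrow> F \<subseteq> increasing_pairs \<and> verts F \<subseteq> {1..N}"
  unfolding edges_on_def increasing_pairs_def verts_def by force

lemma edges_on_mono: "N \<le> M \<Longrightarrow> edges_on N \<subseteq> edges_on M"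
  unfolding edges_on_def by auto

lemma finite_edges_on: "finite (edges_on N)"
  by (rule finite_subset[of _ "{1..N} \<times> {1..N}"]) (auto simp: edges_on_def)

lemma emap_comp: "emap \<sigma> (emap \<tau> e) = emap (\<sigma> \<circ> \<tau>) e"
  by (cases "\<tau> (fst e) \<le> \<tau> (snd e)") (auto simp: emap_def min_def max_def)

lemma gact_comp: "gact \<sigma> (gact \<tau> E) = gact (\<sigma> \<circ> \<tau>) E"
  unfolding gact_def by (auto simp: emap_comp image_image)

lemma emap_id: "fst e \<le> snd e \<Longrightarrow> emap id e = e"
  by (cases e) (auto simp: emap_def)

lemma gact_id: "E \<subseteq> increasing_pairs \<Longrightarrow> gact id E = E"
  unfolding gact_def increasing_pairs_def by (force simp: emap_id)

lemma verts_eq_UN: "verts E = (\<Union>e\<in>E. {fst e, snd e})"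
  unfolding verts_def by auto

lemma verts_gact: "verts (gact \<sigma> E) = \<sigma> ` verts E"
proof -
  have "{fst (emap \<sigma> e), snd (emap \<sigma> e)} = \<sigma> ` {fst e, snd e}" for e
    by (auto simp: emap_def min_def max_def)
  then show ?thesis
    by (simp add: verts_eq_UN gact_def image_UN)
qed

lemma gact_cong: "(\<And>u. u \<in> verts E \<Longrightarrow> \<sigma> u = \<tau> u) \<Longrightarrow> gact \<sigma> E = gact \<tau> E"
  unfolding gact_def emap_def verts_def by (intro image_cong) auto

lemma esign_cong:
  assumes "\<And>u. u \<in> verts E \<Longrightarrow> \<sigma> u = \<tau> u"
  shows "esign \<sigma> E = esign \<tau> E"
proof (cases "finite E")
  case True
  then have "map (emap \<sigma>) (sorted_list_of_set E) = map (emap \<tau>) (sorted_list_of_set E)"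
    using assms by (intro map_cong) (auto simp: emap_def verts_def)
  then show ?thesis
    by (simp only: esign_def)
qed (simp add: esign_def)

lemma inj_on_emap:
  assumes "inj_on \<sigma> (verts E)" "E \<subseteq> increasing_pairs"
  shows "inj_on (emap \<sigma>) E"
proof (rule inj_onI)
  fix e e' assume e: "e \<in> E" "e' \<in> E" "emap \<sigma> e = emap \<sigma> e'"
  then have "{\<sigma> (fst e), \<sigma> (snd e)} = {\<sigma> (fst e'), \<sigma> (snd e')}"
    by (auto simp: emap_def min_def max_def split: if_splits)
  moreover have "fst e \<in> verts E" "snd e \<in> verts E" "fst e' \<in> verts E" "snd e' \<in> verts E"
    using e by (auto simp: verts_def)
  ultimately have "{fst e, snd e} = {fst e', snd e'}"
    using assms(1) by (auto simp: doubleton_eq_iff dest: inj_onD)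
  moreover have "fst e < snd e" "fst e' < snd e'"
    using e assms(2) by (auto simp: increasing_pairs_def)
  ultimately show "e = e'"
    by (cases e; cases e') (auto simp: doubleton_eq_iff)
qed

lemma gact_increasing_pairs:
  assumes "inj_on \<sigma> (verts E)" "E \<subseteq> increasing_pairs"
  shows "gact \<sigma> E \<subseteq> increasing_pairs"
proof
  fix e' assume "e' \<in> gact \<sigma> E"
  then obtain e where e: "e \<in> E" "e' = emap \<sigma> e"
    by (auto simp: gact_def)
  then have "fst e \<in> verts E" "snd e \<in> verts E" "fst e \<noteq> snd e"
    using assms(2) by (auto simp: verts_def increasing_pairs_def)
  then have "\<sigma> (fst e) \<noteq> \<sigma> (snd e)"
    using assms(1) by (auto dest: inj_onD)
  then show "e' \<in> increasing_pairs"
    using e by (auto simp: emap_def increasing_pairs_def min_def max_def)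
qed

lemma gact_subset_edges_on:
  assumes "E \<subseteq> increasing_pairs" "inj_on \<sigma> (verts E)" "\<sigma> ` verts E \<subseteq> {1..M}"
  shows "gact \<sigma> E \<subseteq> edges_on M"
  using assms gact_increasing_pairs[OF assms(2,1)] by (simp add: edges_on_iff verts_gact)

lemma gact_permutes_edges_on:
  assumes "\<sigma> permutes {1..N}" "E \<subseteq> edges_on N"
  shows "gact \<sigma> E \<subseteq> edges_on N"
proof (rule gact_subset_edges_on)
  have "verts E \<subseteq> {1..N}"
    using assms(2) by (simp add: edges_on_iff)
  then show "\<sigma> ` verts E \<subseteq> {1..N}"
    using permutes_image[OF assms(1)] by blast
  show "E \<subseteq> increasing_pairs"
    using assms(2) by (simp add: edges_on_iff)
  show "inj_on \<sigma> (verts E)"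
    using permutes_inj[OF assms(1)] by (rule inj_on_subset) simp
qed

lemma card_gact: "inj_on \<sigma> (verts E) \<Longrightarrow> E \<subseteq> increasing_pairs \<Longrightarrow> card (gact \<sigma> E) = card E"
  unfolding gact_def by (rule card_image[OF inj_on_emap])

lemma esign_comp:
  assumes "inj \<sigma>" "inj \<tau>" "finite E" "E \<subseteq> increasing_pairs"
  shows "esign (\<sigma> \<circ> \<tau>) E = esign \<sigma> (gact \<tau> E) * esign \<tau> E"
proof -
  have inj_\<tau>: "inj_on (emap \<tau>) E"
    using assms(2,4) by (auto intro: inj_on_emap inj_on_subset)
  have "inj_on (emap \<sigma>) (gact \<tau> E)"
    using assms gact_increasing_pairs[of \<tau> E] by (auto intro: inj_on_emap inj_on_subset)
  then have "(-1::rat) ^ card (inversion_pairs (emap \<sigma> \<circ> emap \<tau>) E) =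
      (-1) ^ card (inversion_pairs (emap \<sigma>) (gact \<tau> E)) * (-1) ^ card (inversion_pairs (emap \<tau>) E)"
    unfolding gact_def by (rule neg_one_power_inversion_pairs_comp[OF assms(3) inj_\<tau>])
  moreover have "emap \<sigma> \<circ> emap \<tau> = emap (\<sigma> \<circ> \<tau>)"
    by (simp add: fun_eq_iff emap_comp)
  moreover have "finite (gact \<tau> E)"
    using assms(3) by (simp add: gact_def)
  ultimately show ?thesis
    using assms(3) by (simp add: esign_def inversions_map_sorted_list_of_set)
qed

lemma esign_mult_self: "esign \<sigma> E * esign \<sigma> E = 1"
  unfolding esign_def by (simp flip: power_mult_distrib)

lemma esign_nonzero: "esign \<sigma> E \<noteq> 0"
  unfolding esign_def by simp

lemma exists_permutes_extending:
  assumes "finite S" "A \<subseteq> S" "inj_on f A" "f ` A \<subseteq> S"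
  shows "\<exists>\<pi>. \<pi> permutes S \<and> (\<forall>a\<in>A. \<pi> a = f a)"
proof -
  have "finite A"
    using assms(1,2) by (rule finite_subset[rotated])
  then have "card (S - A) = card (S - f ` A)"
    using assms by (simp add: card_Diff_subset card_image)
  then obtain g where g: "bij_betw g (S - A) (S - f ` A)"
    using assms(1) by (meson finite_Diff finite_same_card_bij)
  define \<pi> where "\<pi> x = (if x \<in> A then f x else if x \<in> S then g x else x)" for x
  have "bij_betw \<pi> A (f ` A)"
    using assms(3) by (auto simp: bij_betw_def \<pi>_def inj_on_def image_iff)
  moreover have "bij_betw \<pi> (S - A) (S - f ` A)"
    using g by (rule bij_betw_cong[THEN iffD1, rotated]) (auto simp: \<pi>_def)
  ultimately have "bij_betw \<pi> (A \<union> (S - A)) (f ` A \<union> (S - f ` A))"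
    by (rule bij_betw_combine) auto
  moreover have "A \<union> (S - A) = S" "f ` A \<union> (S - f ` A) = S"
    using assms(2,4) by auto
  ultimately have "\<pi> permutes S"
    by (intro bij_imp_permutes) (auto simp: \<pi>_def assms(2))
  then show ?thesis
    by (auto simp: \<pi>_def)
qed

section \<open>Restriction of invariants\<close>

lemma act_gact:
  assumes "\<sigma> permutes {1..N}" "E \<subseteq> edges_on N"
  shows "act N \<sigma> x (gact \<sigma> E) = x E * esign \<sigma> E"
proof -
  have "inj_on (gact \<sigma>) (Pow (edges_on N))"
    unfolding gact_def using permutes_inj[OF assms(1)] edges_on_iff
    by (intro inj_on_image_Pow inj_on_emap) (auto intro: inj_on_subset)
  then have "gact \<sigma> E' = gact \<sigma> E \<longleftrightarrow> E' = E" if "E' \<in> Pow (edges_on N)" for E'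
    using that assms(2) by (auto dest: inj_onD)
  then have "act N \<sigma> x (gact \<sigma> E) = (\<Sum>E'\<in>Pow (edges_on N). if E' = E then x E * esign \<sigma> E else 0)"
    unfolding act_def by (intro sum.cong) auto
  also have "\<dots> = x E * esign \<sigma> E"
    using assms(2) finite_edges_on by (simp add: sum.delta')
  finally show ?thesis .
qed

lemma act_outside_edges_on:
  assumes "\<sigma> permutes {1..N}" "\<not> F \<subseteq> edges_on N"
  shows "act N \<sigma> x F = 0"
  unfolding act_def using gact_permutes_edges_on[OF assms(1)] assms(2)
  by (intro sum.neutral) auto

lemma mem_cohom_iff:
  "x \<in> cohom N r \<longleftrightarrow> (\<forall>F. (F \<notin> Pow (edges_on N) \<or> card F \<noteq> r) \<longrightarrow> x F = 0) \<and>
     (\<forall>\<sigma> E. \<sigma> permutes {1..N} \<longrightarrow> E \<subseteq> edges_on N \<longrightarrow> x (gact \<sigma> E) = x E * esign \<sigma> E)"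
    (is "_ \<longleftrightarrow> ?support \<and> _")
proof -
  have "act N \<sigma> x = x \<longleftrightarrow> (\<forall>E. E \<subseteq> edges_on N \<longrightarrow> x (gact \<sigma> E) = x E * esign \<sigma> E)"
    if "?support" and \<sigma>: "\<sigma> permutes {1..N}" for \<sigma>
  proof
    show "act N \<sigma> x = x \<Longrightarrow> \<forall>E. E \<subseteq> edges_on N \<longrightarrow> x (gact \<sigma> E) = x E * esign \<sigma> E"
      using act_gact[OF \<sigma>] by metis
  next
    assume inv: "\<forall>E. E \<subseteq> edges_on N \<longrightarrow> x (gact \<sigma> E) = x E * esign \<sigma> E"
    show "act N \<sigma> x = x"
    proof
      fix F
      show "act N \<sigma> x F = x F"
      proof (cases "F \<subseteq> edges_on N")
        case True
        define E where "E = gact (inv \<sigma>) F"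
        have E: "E \<subseteq> edges_on N"
          unfolding E_def using gact_permutes_edges_on[OF permutes_inv[OF \<sigma>] True] .
        have "F = gact \<sigma> E"
          using True by (simp add: E_def gact_comp permutes_inv_o[OF \<sigma>] gact_id edges_on_iff)
        then show ?thesis
          using act_gact[OF \<sigma> E] inv E by simp
      qed (use act_outside_edges_on[OF \<sigma>] \<open>?support\<close> in auto)
    qed
  qed
  then show ?thesis
    unfolding cohom_def by auto
qed

lemma card_verts_le: "finite F \<Longrightarrow> card (verts F) \<le> 2 * card F"
  unfolding verts_def using card_Un_le[of "fst ` F" "snd ` F"] card_image_le[of F fst] card_image_le[of F snd]
  by linarith

lemma exists_permutes_into_edges_on:
  assumes "F \<subseteq> edges_on (Suc n)" "card (verts F) \<le> n"
  shows "\<exists>\<sigma>. \<sigma> permutes {1..Suc n} \<and> gact \<sigma> F \<subseteq> edges_on n"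
proof -
  have V: "verts F \<subseteq> {1..Suc n}" and inc: "F \<subseteq> increasing_pairs"
    using assms(1) by (simp_all add: edges_on_iff)
  then have "finite (verts F)"
    using finite_subset by blast
  then obtain h where h: "h ` verts F \<subseteq> {1..n}" "inj_on h (verts F)"
    using card_le_inj[of "verts F" "{1..n}"] assms(2) by auto
  then obtain \<sigma> where \<sigma>: "\<sigma> permutes {1..Suc n}" "\<forall>u\<in>verts F. \<sigma> u = h u"
    using exists_permutes_extending[of "{1..Suc n}" "verts F" h] V by fastforce
  then have "gact \<sigma> F = gact h F"
    by (intro gact_cong) auto
  also have "\<dots> \<subseteq> edges_on n"
    using inc h(2,1) by (rule gact_subset_edges_on)
  finally show ?thesis
    using \<sigma>(1) by blast
qed

text \<open>A permutation of \<open>{1..n+1}\<close> relating two monomials on \<open>{1..n}\<close> agrees on the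
  vertices involved with a permutation of \<open>{1..n}\<close>.\<close>
lemma cohom_gact_permutes_Suc:
  assumes y: "y \<in> cohom n r" and \<sigma>: "\<sigma> permutes {1..Suc n}"
    and F: "F \<subseteq> edges_on n" and \<sigma>F: "gact \<sigma> F \<subseteq> edges_on n"
  shows "y (gact \<sigma> F) = y F * esign \<sigma> F"
proof -
  have "verts F \<subseteq> {1..n}" "\<sigma> ` verts F \<subseteq> {1..n}"
    using F \<sigma>F by (simp_all add: edges_on_iff verts_gact)
  moreover have "inj_on \<sigma> (verts F)"
    using permutes_inj[OF \<sigma>] by (rule inj_on_subset) simp
  ultimately obtain \<pi> where \<pi>: "\<pi> permutes {1..n}" "\<forall>u\<in>verts F. \<pi> u = \<sigma> u"
    using exists_permutes_extending[of "{1..n}" "verts F" \<sigma>] by auto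
  then have "gact \<pi> F = gact \<sigma> F" "esign \<pi> F = esign \<sigma> F"
    by (auto intro!: gact_cong esign_cong)
  then show ?thesis
    using y \<pi>(1) F unfolding mem_cohom_iff by metis
qed

lemma cohom_transport_eq:
  assumes y: "y \<in> cohom n r" and \<sigma>: "\<sigma> permutes {1..Suc n}" and \<rho>: "\<rho> permutes {1..Suc n}"
    and F: "F \<subseteq> edges_on (Suc n)"
    and \<sigma>F: "gact \<sigma> F \<subseteq> edges_on n" and \<rho>F: "gact \<rho> F \<subseteq> edges_on n"
  shows "y (gact \<rho> F) * esign \<rho> F = y (gact \<sigma> F) * esign \<sigma> F"
proof -
  define \<pi> where "\<pi> = \<rho> \<circ> inv \<sigma>"
  have \<pi>: "\<pi> permutes {1..Suc n}"
    unfolding \<pi>_def using \<sigma> \<rho> by (intro permutes_compose permutes_inv)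
  have \<pi>\<sigma>: "\<pi> \<circ> \<sigma> = \<rho>"
    unfolding \<pi>_def by (simp add: comp_assoc permutes_inv_o[OF \<sigma>])
  have finF: "finite F"
    using F finite_edges_on by (rule finite_subset)
  have incF: "F \<subseteq> increasing_pairs"
    using F by (simp add: edges_on_iff)
  have "esign \<rho> F = esign \<pi> (gact \<sigma> F) * esign \<sigma> F"
    unfolding \<pi>\<sigma>[symmetric] using permutes_inj \<pi> \<sigma> finF incF by (intro esign_comp) auto
  moreover have "y (gact \<rho> F) = y (gact \<sigma> F) * esign \<pi> (gact \<sigma> F)"
    using cohom_gact_permutes_Suc[OF y \<pi> \<sigma>F] \<rho>F by (simp add: gact_comp \<pi>\<sigma>)
  ultimately show ?thesis
    by (simp add: esign_mult_self mult.assoc flip: mult.assoc[of "esign \<pi> _"])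
qed

lemma exists_permutes_into_edges_on_of_degree:
  assumes "F \<subseteq> edges_on (Suc n)" "2 * card F \<le> n"
  shows "\<exists>\<sigma>. \<sigma> permutes {1..Suc n} \<and> gact \<sigma> F \<subseteq> edges_on n"
proof (rule exists_permutes_into_edges_on[OF assms(1)])
  have "finite F"
    using assms(1) finite_edges_on by (rule finite_subset)
  then show "card (verts F) \<le> n"
    using card_verts_le[of F] assms(2) by linarith
qed

lemma res_cohom_subset: "res n ` cohom (Suc n) r \<subseteq> cohom n r"
proof
  fix z assume "z \<in> res n ` cohom (Suc n) r"
  then obtain x where x: "x \<in> cohom (Suc n) r" and z: "z = res n x"
    by blast
  have sub: "edges_on n \<subseteq> edges_on (Suc n)"
    by (rule edges_on_mono) simp
  show "z \<in> cohom n r"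
    unfolding mem_cohom_iff
  proof (intro conjI allI impI)
    fix F assume "F \<notin> Pow (edges_on n) \<or> card F \<noteq> r"
    then show "z F = 0"
      using x sub unfolding z res_def mem_cohom_iff by auto
  next
    fix \<sigma> E assume \<sigma>: "\<sigma> permutes {1..n}" and E: "E \<subseteq> edges_on n"
    have "\<sigma> permutes {1..Suc n}"
      using \<sigma> by (rule permutes_subset) auto
    then show "z (gact \<sigma> E) = z E * esign \<sigma> E"
      using x E sub gact_permutes_edges_on[OF \<sigma> E] unfolding z res_def mem_cohom_iff by auto
  qed
qed

lemma inj_on_res_cohom:
  assumes "2 * r \<le> n"
  shows "inj_on (res n) (cohom (Suc n) r)"
proof (rule inj_onI, rule ext)
  fix x y F
  assume x: "x \<in> cohom (Suc n) r" and y: "y \<in> cohom (Suc n) r" and eq: "res n x = res n y"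
  show "x F = y F"
  proof (cases "F \<subseteq> edges_on (Suc n) \<and> card F = r")
    case True
    then obtain \<sigma> where \<sigma>: "\<sigma> permutes {1..Suc n}" "gact \<sigma> F \<subseteq> edges_on n"
      using exists_permutes_into_edges_on_of_degree assms by blast
    have "x (gact \<sigma> F) = y (gact \<sigma> F)"
      using fun_cong[OF eq, of "gact \<sigma> F"] \<sigma>(2) by (simp add: res_def)
    then have "x F * esign \<sigma> F = y F * esign \<sigma> F"
      using x y \<sigma>(1) True unfolding mem_cohom_iff by metis
    then show ?thesis
      using esign_nonzero by simp
  qed (use x y in \<open>auto simp: mem_cohom_iff\<close>)
qed

text \<open>By \<open>cohom_transport_eq\<close> the value does not depend on the permutation chosen.\<close>
definition lift_cohom :: "nat \<Rightarrow> nat \<Rightarrow> ext \<Rightarrow> ext" where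
  "lift_cohom n r y F =
     (if F \<subseteq> edges_on (Suc n) \<and> card F = r then
        let \<sigma> = SOME \<sigma>. \<sigma> permutes {1..Suc n} \<and> gact \<sigma> F \<subseteq> edges_on n
        in y (gact \<sigma> F) * esign \<sigma> F
      else 0)"

lemma lift_cohom_eq:
  assumes "y \<in> cohom n r" "F \<subseteq> edges_on (Suc n)" "card F = r"
    and "\<sigma> permutes {1..Suc n}" "gact \<sigma> F \<subseteq> edges_on n"
  shows "lift_cohom n r y F = y (gact \<sigma> F) * esign \<sigma> F"
proof -
  define \<rho> where "\<rho> = (SOME \<sigma>. \<sigma> permutes {1..Suc n} \<and> gact \<sigma> F \<subseteq> edges_on n)"
  have "\<rho> permutes {1..Suc n} \<and> gact \<rho> F \<subseteq> edges_on n"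
    unfolding \<rho>_def using assms(4,5) by (rule someI[of _ \<sigma>, OF conjI])
  then have "y (gact \<rho> F) * esign \<rho> F = y (gact \<sigma> F) * esign \<sigma> F"
    using assms by (intro cohom_transport_eq) auto
  then show ?thesis
    using assms(2,3) by (simp add: lift_cohom_def \<rho>_def)
qed

lemma res_lift_cohom:
  assumes y: "y \<in> cohom n r" and r: "2 * r \<le> n"
  shows "res n (lift_cohom n r y) = y"
proof
  fix F
  show "res n (lift_cohom n r y) F = y F"
  proof (cases "F \<subseteq> edges_on n \<and> card F = r")
    case True
    then have F: "F \<subseteq> edges_on (Suc n)"
      using edges_on_mono[of n "Suc n"] by auto
    then obtain \<sigma> where \<sigma>: "\<sigma> permutes {1..Suc n}" "gact \<sigma> F \<subseteq> edges_on n"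
      using exists_permutes_into_edges_on_of_degree True r by blast
    have "lift_cohom n r y F = y F * (esign \<sigma> F * esign \<sigma> F)"
      using lift_cohom_eq[OF y F _ \<sigma>] cohom_gact_permutes_Suc[OF y \<sigma>(1) _ \<sigma>(2)] True by simp
    then show ?thesis
      using True by (simp add: res_def esign_mult_self)
  qed (use y in \<open>auto simp: res_def lift_cohom_def mem_cohom_iff\<close>)
qed

lemma lift_cohom_mem:
  assumes y: "y \<in> cohom n r" and r: "2 * r \<le> n"
  shows "lift_cohom n r y \<in> cohom (Suc n) r"
  unfolding mem_cohom_iff
proof (intro conjI allI impI)
  fix F assume "F \<notin> Pow (edges_on (Suc n)) \<or> card F \<noteq> r"
  then show "lift_cohom n r y F = 0"
    by (auto simp: lift_cohom_def)
next
  fix \<tau> E assume \<tau>: "\<tau> permutes {1..Suc n}" and E: "E \<subseteq> edges_on (Suc n)"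
  have \<tau>E: "gact \<tau> E \<subseteq> edges_on (Suc n)"
    using \<tau> E by (rule gact_permutes_edges_on)
  have card: "card (gact \<tau> E) = card E"
    using E permutes_inj[OF \<tau>] by (intro card_gact) (auto simp: edges_on_iff intro: inj_on_subset)
  show "lift_cohom n r y (gact \<tau> E) = lift_cohom n r y E * esign \<tau> E"
  proof (cases "card E = r")
    case True
    then obtain \<rho> where \<rho>: "\<rho> permutes {1..Suc n}" "gact \<rho> (gact \<tau> E) \<subseteq> edges_on n"
      using exists_permutes_into_edges_on_of_degree[OF \<tau>E] card r by auto
    have \<rho>\<tau>: "\<rho> \<circ> \<tau> permutes {1..Suc n}" "gact (\<rho> \<circ> \<tau>) E \<subseteq> edges_on n"
      using \<rho> \<tau> by (auto simp: gact_comp intro: permutes_compose)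
    have "esign (\<rho> \<circ> \<tau>) E = esign \<rho> (gact \<tau> E) * esign \<tau> E"
      using E permutes_inj[OF \<rho>(1)] permutes_inj[OF \<tau>] rev_finite_subset[OF finite_edges_on E]
      by (intro esign_comp) (auto simp: edges_on_iff)
    then have "lift_cohom n r y E * esign \<tau> E =
        y (gact \<rho> (gact \<tau> E)) * esign \<rho> (gact \<tau> E) * (esign \<tau> E * esign \<tau> E)"
      using lift_cohom_eq[OF y E True \<rho>\<tau>] by (simp add: gact_comp mult.assoc)
    also have "\<dots> = lift_cohom n r y (gact \<tau> E)"
      using lift_cohom_eq[OF y \<tau>E _ \<rho>] card True by (simp add: esign_mult_self)
    finally show ?thesis ..
  qed (simp add: lift_cohom_def card)
qed

lemma bij_betw_res_cohom:
  assumes "2 * r \<le> n"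
  shows "bij_betw (res n) (cohom (Suc n) r) (cohom n r)"
proof (rule bij_betw_imageI)
  show "inj_on (res n) (cohom (Suc n) r)"
    using assms by (rule inj_on_res_cohom)
  show "res n ` cohom (Suc n) r = cohom n r"
    using res_cohom_subset res_lift_cohom[OF _ assms] lift_cohom_mem[OF _ assms]
    by (metis image_eqI subsetI subset_antisym)
qed

section \<open>Orbits and non-isolated parts\<close>

definition relabellings :: "nat \<Rightarrow> (nat \<times> nat) set \<Rightarrow> (nat \<times> nat) set set" where
  "relabellings N E = {gact h E | h. inj_on h (verts E) \<and> h ` verts E \<subseteq> {1..N}}"

lemma graph_on_gact: "\<sigma> permutes {1..N} \<Longrightarrow> graph_on N E \<Longrightarrow> graph_on N (gact \<sigma> E)"
  unfolding graph_on_def by (rule gact_permutes_edges_on)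

lemma orbit_eq_relabellings:
  assumes "graph_on N E"
  shows "orbit N E = relabellings N E"
proof -
  have V: "verts E \<subseteq> {1..N}"
    using assms by (simp add: graph_on_def edges_on_iff)
  show ?thesis
  proof (intro equalityI subsetI)
    fix F
    assume "F \<in> orbit N E"
    then obtain \<sigma> where \<sigma>: "\<sigma> permutes {1..N}" "F = gact \<sigma> E"
      by (auto simp: orbit_def)
    moreover have "inj_on \<sigma> (verts E)"
      using permutes_inj[OF \<sigma>(1)] by (rule inj_on_subset) simp
    moreover have "\<sigma> ` verts E \<subseteq> {1..N}"
      using V permutes_image[OF \<sigma>(1)] by blast
    ultimately show "F \<in> relabellings N E"
      by (auto simp: relabellings_def)
  next
    fix F
    assume "F \<in> relabellings N E"
    then obtain h where h: "inj_on h (verts E)" "h ` verts E \<subseteq> {1..N}" "F = gact h E"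
      by (auto simp: relabellings_def)
    then obtain \<pi> where \<pi>: "\<pi> permutes {1..N}" "\<forall>u\<in>verts E. \<pi> u = h u"
      using exists_permutes_extending[of "{1..N}" "verts E" h] V by fastforce
    then have "gact \<pi> E = F"
      unfolding h(3) by (intro gact_cong) auto
    then show "F \<in> orbit N E"
      using \<pi>(1) by (auto simp: orbit_def)
  qed
qed

lemma relabellings_gact:
  assumes inj: "inj_on h (verts E)"
  shows "relabellings N (gact h E) = relabellings N E"
proof (intro equalityI subsetI)
  fix F assume "F \<in> relabellings N (gact h E)"
  then obtain g where g: "inj_on g (h ` verts E)" "g ` h ` verts E \<subseteq> {1..N}" "F = gact g (gact h E)"
    by (auto simp: relabellings_def verts_gact)
  then have "F = gact (g \<circ> h) E" "inj_on (g \<circ> h) (verts E)" "(g \<circ> h) ` verts E \<subseteq> {1..N}"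
    using inj by (auto simp: gact_comp intro: comp_inj_on)
  then show "F \<in> relabellings N E"
    unfolding relabellings_def by blast
next
  fix F assume "F \<in> relabellings N E"
  then obtain k where k: "inj_on k (verts E)" "k ` verts E \<subseteq> {1..N}" "F = gact k E"
    by (auto simp: relabellings_def)
  define g where "g = k \<circ> inv_into (verts E) h"
  have "gact g (gact h E) = gact k E"
    unfolding gact_comp g_def using inj by (intro gact_cong) simp
  moreover have "inj_on g (h ` verts E)" "g ` h ` verts E \<subseteq> {1..N}"
    using inj k by (auto simp: g_def inj_on_inv_into intro!: comp_inj_on)
  ultimately show "F \<in> relabellings N (gact h E)"
    using k(3) by (auto simp: relabellings_def verts_gact)
qed

lemma nonisolated_part_orbit:
  assumes "graph_on N E"
  shows "nonisolated_part (orbit N E) = relabellings (card (verts E)) E"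
proof (intro equalityI subsetI)
  fix F
  assume "F \<in> nonisolated_part (orbit N E)"
  then obtain k h where k: "verts F = {1..k}" and h: "inj_on h (verts E)" "F = gact h E"
    by (auto simp: nonisolated_part_def orbit_eq_relabellings[OF assms] relabellings_def)
  then have "h ` verts E = {1..k}"
    by (simp add: verts_gact)
  moreover from this have "k = card (verts E)"
    using card_image[OF h(1)] by simp
  ultimately show "F \<in> relabellings (card (verts E)) E"
    using h by (auto simp: relabellings_def)
next
  have V: "verts E \<subseteq> {1..N}"
    using assms by (simp add: graph_on_def edges_on_iff)
  then have fin: "finite (verts E)"
    using finite_subset by blast
  fix F
  assume "F \<in> relabellings (card (verts E)) E"
  then obtain h where h: "inj_on h (verts E)" "h ` verts E \<subseteq> {1..card (verts E)}" "F = gact h E"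
    by (auto simp: relabellings_def)
  have "h ` verts E = {1..card (verts E)}"
    using h fin by (intro card_subset_eq) (auto simp: card_image)
  moreover have "card (verts E) \<le> N"
    using card_mono[OF _ V] by simp
  ultimately have "h ` verts E \<subseteq> {1..N}" "verts F = {1..card (verts E)}"
    using h(3) by (auto simp: verts_gact)
  then have "F \<in> relabellings N E" "\<exists>k. verts F = {1..k}"
    using h unfolding relabellings_def by blast+
  then show "F \<in> nonisolated_part (orbit N E)"
    by (simp add: nonisolated_part_def orbit_eq_relabellings[OF assms])
qed

lemma nonisolated_part_orbit_mem_isofree_classes:
  assumes "graph_on N E"
  shows "nonisolated_part (orbit N E) \<in> isofree_classes"
proof -
  define m where "m = card (verts E)"
  have V: "verts E \<subseteq> {1..N}" and inc: "E \<subseteq> increasing_pairs"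
    using assms by (simp_all add: graph_on_def edges_on_iff)
  then have "finite (verts E)"
    using finite_subset by blast
  then obtain h where h: "bij_betw h (verts E) {1..m}"
    unfolding m_def by (metis card_atLeastAtMost diff_Suc_1 finite_atLeastAtMost finite_same_card_bij)
  then have inj: "inj_on h (verts E)" and im: "h ` verts E = {1..m}"
    by (simp_all add: bij_betw_def)
  define G where "G = gact h E"
  have verts_G: "verts G = {1..m}"
    using im by (simp add: G_def verts_gact)
  have "graph_on m G"
    unfolding graph_on_def G_def using inc inj im by (intro gact_subset_edges_on) simp_all
  have "nonisolated_part (orbit N E) = relabellings m E"
    unfolding m_def using assms by (rule nonisolated_part_orbit)
  also have "\<dots> = relabellings m G"
    unfolding G_def using inj by (rule relabellings_gact[symmetric])
  also have "\<dots> = orbit m G"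
    using \<open>graph_on m G\<close> by (rule orbit_eq_relabellings[symmetric])
  finally show ?thesis
    using verts_G \<open>graph_on m G\<close> unfolding isofree_classes_def by blast
qed

lemma orbit_eq_of_mem:
  assumes E0: "graph_on N E0" and E: "E \<in> orbit N E0"
  shows "graph_on N E" "orbit N E = orbit N E0"
proof -
  obtain \<sigma> where \<sigma>: "\<sigma> permutes {1..N}" "E = gact \<sigma> E0"
    using E by (auto simp: orbit_def)
  then show "graph_on N E"
    using E0 by (simp add: graph_on_gact)
  have "inj_on \<sigma> (verts E0)"
    using permutes_inj[OF \<sigma>(1)] by (rule inj_on_subset) simp
  then show "orbit N E = orbit N E0"
    using E0 \<sigma>(2) \<open>graph_on N E\<close> by (simp add: orbit_eq_relabellings relabellings_gact)
qed

lemma gact_mem_orbit: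
  assumes "\<sigma> permutes {1..N}" "F \<in> orbit N E"
  shows "gact \<sigma> F \<in> orbit N E"
proof -
  obtain \<tau> where "\<tau> permutes {1..N}" "F = gact \<tau> E"
    using assms(2) by (auto simp: orbit_def)
  then show ?thesis
    using assms(1) by (auto simp: orbit_def gact_comp intro: permutes_compose)
qed

lemma delete_vertex_eq_gact:
  assumes "E \<subseteq> increasing_pairs"
  shows "delete_vertex v E = gact (\<lambda>i. if v < i then i - 1 else i) E"
  unfolding delete_vertex_def gact_def
proof (rule image_cong[OF refl])
  fix e assume "e \<in> E"
  then have "fst e < snd e"
    using assms by (auto simp: increasing_pairs_def)
  then show "(case e of (i, j) \<Rightarrow> (if v < i then i - 1 else i, if v < j then j - 1 else j)) =
      emap (\<lambda>i. if v < i then i - 1 else i) e"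
    by (cases e) (auto simp: emap_def)
qed

lemma nonisolated_part_orbit_delete_vertex:
  assumes E: "graph_on (Suc n) E" and v: "v \<in> {1..Suc n}" and iso: "isolated v E"
  shows "nonisolated_part (orbit n (delete_vertex v E)) = nonisolated_part (orbit (Suc n) E)"
proof -
  define \<delta> where "\<delta> i = (if v < i then i - 1 else i)" for i :: nat
  have V: "verts E \<subseteq> {1..Suc n} - {v}"
    using E iso by (auto simp: graph_on_def edges_on_iff isolated_def)
  have inc: "E \<subseteq> increasing_pairs"
    using E by (simp add: graph_on_def edges_on_iff)
  have inj: "inj_on \<delta> (verts E)"
    using V by (auto simp: inj_on_def \<delta>_def split: if_splits)
  have "\<delta> u \<in> {1..n}" if "u \<in> verts E" for u
    using subsetD[OF V that] v by (auto simp: \<delta>_def)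
  then have "\<delta> ` verts E \<subseteq> {1..n}"
    by blast
  then have "graph_on n (gact \<delta> E)"
    unfolding graph_on_def using inc inj by (rule gact_subset_edges_on[rotated 2])
  then show ?thesis
    using E inj inc
    by (simp add: nonisolated_part_orbit delete_vertex_eq_gact relabellings_gact verts_gact card_image
        flip: \<delta>_def)
qed

section \<open>Restriction of the basis elements\<close>

lemma sum_if_mem_zero_else_const:
  "finite A \<Longrightarrow> (\<Sum>b\<in>A. if b \<in> B then 0 else c) = of_nat (card (A - B)) * c"
  by (simp add: sum.If_cases Diff_eq)

text \<open>Writing \<open>\<sigma> = (n+1 b) \<circ> q\<close> with \<open>q\<close> a permutation of \<open>{1..n}\<close>, the summand vanishes
  when \<open>b \<in> q ` V\<close> and equals \<open>h q\<close> otherwise.\<close>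
lemma sum_permutes_Suc_local:
  fixes h :: "(nat \<Rightarrow> nat) \<Rightarrow> 'a::semiring_1"
  assumes V: "V \<subseteq> {1..n}"
    and local: "\<And>\<sigma> \<tau>. (\<And>u. u \<in> V \<Longrightarrow> \<sigma> u = \<tau> u) \<Longrightarrow> h \<sigma> = h \<tau>"
    and vanish: "\<And>\<sigma>. Suc n \<in> \<sigma> ` V \<Longrightarrow> h \<sigma> = 0"
  shows "(\<Sum>\<sigma>\<in>{\<sigma>. \<sigma> permutes {1..Suc n}}. h \<sigma>) =
           of_nat (Suc n - card V) * (\<Sum>\<sigma>\<in>{\<sigma>. \<sigma> permutes {1..n}}. h \<sigma>)"
proof -
  have inner: "(\<Sum>b\<in>{1..Suc n}. h (transpose (Suc n) b \<circ> q)) = of_nat (Suc n - card V) * h q"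
    if q: "q permutes {1..n}" for q
  proof -
    have qV: "q ` V \<subseteq> {1..n}"
      using V permutes_image[OF q] by blast
    have "h (transpose (Suc n) b \<circ> q) = (if b \<in> q ` V then 0 else h q)" for b
    proof (cases "b \<in> q ` V")
      case True
      then obtain u where "u \<in> V" "q u = b"
        by auto
      then have "Suc n \<in> (transpose (Suc n) b \<circ> q) ` V"
        by (auto intro: image_eqI[of _ _ u])
      then show ?thesis
        using True vanish by simp
    next
      case False
      then have "(transpose (Suc n) b \<circ> q) u = q u" if "u \<in> V" for u
        using that qV by (auto simp: transpose_def)
      then show ?thesis
        using False local by metis
    qed
    then have "(\<Sum>b\<in>{1..Suc n}. h (transpose (Suc n) b \<circ> q)) =
        (\<Sum>b\<in>{1..Suc n}. if b \<in> q ` V then 0 else h q)"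
      by (rule sum.cong[OF refl])
    also have "\<dots> = of_nat (card ({1..Suc n} - q ` V)) * h q"
      by (rule sum_if_mem_zero_else_const) simp
    also have "card ({1..Suc n} - q ` V) = Suc n - card V"
      using qV card_image[OF inj_on_subset[OF permutes_inj[OF q], of V]]
      by (subst card_Diff_subset) (auto intro: finite_subset)
    finally show ?thesis .
  qed
  have "(\<Sum>\<sigma>\<in>{\<sigma>. \<sigma> permutes {1..Suc n}}. h \<sigma>) =
      (\<Sum>b\<in>{1..Suc n}. \<Sum>q\<in>{q. q permutes {1..n}}. h (transpose (Suc n) b \<circ> q))"
    using sum_over_permutations_insert[of "{1..n}" "Suc n" h] by (simp add: atLeastAtMostSuc_conv)
  also have "\<dots> = (\<Sum>q\<in>{q. q permutes {1..n}}. of_nat (Suc n - card V) * h q)"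
    using inner by (subst sum.swap) simp
  finally show ?thesis
    by (simp add: sum_distrib_left)
qed

lemma card_stab_eq_sum:
  "of_nat (card (stab N \<Delta>)) = (\<Sum>\<sigma>\<in>{\<sigma>. \<sigma> permutes {1..N}}. if gact \<sigma> \<Delta> = \<Delta> then 1 else (0::'a::semiring_1))"
  unfolding stab_def by (simp add: sum.If_cases finite_permutations Collect_conj_eq[symmetric])

lemma res_alpha_eq:
  assumes D': "Delta R D' = Delta R D" and sub: "Delta R D \<subseteq> edges_on n"
  shows "res n (alpha R (Suc n) D) = alpha R n D'"
proof
  fix F
  let ?\<Delta> = "Delta R D"
  let ?orbit_sum = "\<lambda>N. \<Sum>\<sigma>\<in>{\<sigma>. \<sigma> permutes {1..N}}. if gact \<sigma> ?\<Delta> = F then esign \<sigma> ?\<Delta> else 0"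
  let ?k = "of_nat (Suc n - card (verts ?\<Delta>)) :: rat"
  have V: "verts ?\<Delta> \<subseteq> {1..n}"
    using sub by (simp add: edges_on_iff)
  then have "card (verts ?\<Delta>) \<le> n"
    using card_mono[of "{1..n}"] by fastforce
  then have k: "?k \<noteq> 0"
    by simp
  have vanish: "gact \<sigma> ?\<Delta> \<noteq> G" if "Suc n \<in> \<sigma> ` verts ?\<Delta>" "G \<subseteq> edges_on n" for \<sigma> G
  proof
    assume "gact \<sigma> ?\<Delta> = G"
    then have "verts (gact \<sigma> ?\<Delta>) \<subseteq> {1..n}"
      using that(2) by (simp add: edges_on_iff)
    then have "\<sigma> ` verts ?\<Delta> \<subseteq> {1..n}"
      by (simp add: verts_gact)
    then show False
      using that(1) by auto
  qed
  show "res n (alpha R (Suc n) D) F = alpha R n D' F"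
  proof (cases "F \<subseteq> edges_on n")
    case True
    have "?orbit_sum (Suc n) = ?k * ?orbit_sum n"
    proof (rule sum_permutes_Suc_local[OF V])
      fix \<sigma> \<tau> :: "nat \<Rightarrow> nat" assume agree: "\<And>u. u \<in> verts ?\<Delta> \<Longrightarrow> \<sigma> u = \<tau> u"
      have "gact \<sigma> ?\<Delta> = gact \<tau> ?\<Delta>"
        using agree by (rule gact_cong)
      moreover have "esign \<sigma> ?\<Delta> = esign \<tau> ?\<Delta>"
        using agree by (rule esign_cong)
      ultimately show "(if gact \<sigma> ?\<Delta> = F then esign \<sigma> ?\<Delta> else 0) =
          (if gact \<tau> ?\<Delta> = F then esign \<tau> ?\<Delta> else 0)"
        by simp
    qed (use vanish[OF _ True] in simp)
    moreover have "(of_nat (card (stab (Suc n) ?\<Delta>)) :: rat) = ?k * of_nat (card (stab n ?\<Delta>))"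
      unfolding card_stab_eq_sum
    proof (rule sum_permutes_Suc_local[OF V])
      fix \<sigma> \<tau> :: "nat \<Rightarrow> nat" assume agree: "\<And>u. u \<in> verts ?\<Delta> \<Longrightarrow> \<sigma> u = \<tau> u"
      have "gact \<sigma> ?\<Delta> = gact \<tau> ?\<Delta>"
        using agree by (rule gact_cong)
      then show "(if gact \<sigma> ?\<Delta> = ?\<Delta> then 1 else 0) = (if gact \<tau> ?\<Delta> = ?\<Delta> then 1 else (0::rat))"
        by simp
    qed (use vanish[OF _ sub] in simp)
    ultimately show ?thesis
      using True k unfolding res_def alpha_def D' by simp
  next
    case False
    then have "?orbit_sum n = 0"
      using gact_permutes_edges_on[OF _ sub] by (intro sum.neutral) auto
    then show ?thesis
      using False unfolding res_def alpha_def D' by simp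
  qed
qed

lemma res_alpha_eq_zero:
  assumes "\<And>\<sigma>. \<sigma> permutes {1..Suc n} \<Longrightarrow> \<not> gact \<sigma> (Delta R D) \<subseteq> edges_on n"
  shows "res n (alpha R (Suc n) D) = (\<lambda>F. 0)"
proof
  fix F
  have "(\<Sum>\<sigma>\<in>{\<sigma>. \<sigma> permutes {1..Suc n}}. if gact \<sigma> (Delta R D) = F then esign \<sigma> (Delta R D) else 0) = 0"
    if "F \<subseteq> edges_on n"
    using assms that by (intro sum.neutral) force
  then show "res n (alpha R (Suc n) D) F = 0"
    by (simp add: res_def alpha_def)
qed

lemma Delta_mem_nonisolated_part:
  assumes "rep_choice R" "graph_on N E"
  shows "Delta R (orbit N E) \<in> nonisolated_part (orbit N E)"
  using assms nonisolated_part_orbit_mem_isofree_classes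
  by (auto simp: rep_choice_def Delta_def)

lemma res_alpha_delete_isolated:
  assumes R: "rep_choice R" and E: "graph_on (Suc n) E"
    and v: "v \<in> {1..Suc n}" and iso: "isolated v E"
  shows "res n (alpha R (Suc n) (orbit (Suc n) E)) = alpha R n (orbit n (delete_vertex v E))"
proof (rule res_alpha_eq)
  show "Delta R (orbit n (delete_vertex v E)) = Delta R (orbit (Suc n) E)"
    unfolding Delta_def using E v iso by (simp add: nonisolated_part_orbit_delete_vertex)
  have V: "verts E \<subseteq> {1..Suc n} - {v}"
    using E iso by (auto simp: graph_on_def edges_on_iff isolated_def)
  then have "card (verts E) \<le> n"
    using v card_mono[OF _ V] by simp
  moreover obtain h where h: "inj_on h (verts E)" "h ` verts E \<subseteq> {1..card (verts E)}"
      "Delta R (orbit (Suc n) E) = gact h E"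
    using Delta_mem_nonisolated_part[OF R E]
    by (auto simp: nonisolated_part_orbit[OF E] relabellings_def)
  ultimately have "h ` verts E \<subseteq> {1..n}"
    by auto
  moreover have "E \<subseteq> increasing_pairs"
    using E by (simp add: graph_on_def edges_on_iff)
  ultimately show "Delta R (orbit (Suc n) E) \<subseteq> edges_on n"
    using h(1,3) by (simp add: gact_subset_edges_on)
qed

lemma res_alpha_no_isolated:
  assumes R: "rep_choice R" and E: "graph_on (Suc n) E"
    and no_iso: "\<forall>F \<in> orbit (Suc n) E. \<not> isolated (Suc n) F"
  shows "res n (alpha R (Suc n) (orbit (Suc n) E)) = (\<lambda>F. 0)"
proof (rule res_alpha_eq_zero)
  fix \<sigma> assume \<sigma>: "\<sigma> permutes {1..Suc n}"
  have "Delta R (orbit (Suc n) E) \<in> orbit (Suc n) E"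
    using Delta_mem_nonisolated_part[OF R E] by (simp add: nonisolated_part_def)
  then have "Suc n \<in> verts (gact \<sigma> (Delta R (orbit (Suc n) E)))"
    using no_iso gact_mem_orbit[OF \<sigma>] by (auto simp: isolated_def)
  then show "\<not> gact \<sigma> (Delta R (orbit (Suc n) E)) \<subseteq> edges_on n"
    by (auto simp: edges_on_iff)
qed

theorem proposition2p9:
  fixes R :: "(nat \<times> nat) set set \<Rightarrow> (nat \<times> nat) set" and n :: nat
  assumes "rep_choice R" and "n \<ge> 1"
  shows "(\<forall>D \<in> D_classes (Suc n).
            (\<forall>E v. E \<in> D \<longrightarrow> v \<in> {1..Suc n} \<longrightarrow> isolated v E \<longrightarrow>
                res n (alpha R (Suc n) D) = alpha R n (orbit n (delete_vertex v E))) \<and>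
            ((\<forall>E \<in> D. \<forall>v \<in> {1..Suc n}. \<not> isolated v E) \<longrightarrow>
                res n (alpha R (Suc n) D) = (\<lambda>F. 0)))
         \<and> (\<forall>r. 2 * r \<le> n \<longrightarrow> bij_betw (res n) (cohom (Suc n) r) (cohom n r))"
proof (intro conjI ballI allI impI)
  fix D assume "D \<in> D_classes (Suc n)"
  then obtain E0 where E0: "graph_on (Suc n) E0" "D = orbit (Suc n) E0"
    by (auto simp: D_classes_def graph_classes_def)
  show "res n (alpha R (Suc n) D) = alpha R n (orbit n (delete_vertex v E))"
    if "E \<in> D" "v \<in> {1..Suc n}" "isolated v E" for E v
    using orbit_eq_of_mem[OF E0(1)] res_alpha_delete_isolated[OF assms(1) _ that(2,3)] that(1) E0(2)
    by metis
  show "res n (alpha R (Suc n) D) = (\<lambda>F. 0)" if "\<forall>E \<in> D. \<forall>v \<in> {1..Suc n}. \<not> isolated v E"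
    using res_alpha_no_isolated[OF assms(1) E0(1)] that E0(2) by simp
next
  show "bij_betw (res n) (cohom (Suc n) r) (cohom n r)" if "2 * r \<le> n" for r
    using that by (rule bij_betw_res_cohom)
qed

end
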